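(* Let $T$ be a random draft tree generated by Greedy sampling with root $r$, and let $\tilde p_r\in[0,1]$. Let $N_{\rm Mod}(T)$ be the acceptance length of modified UniVer (UniVer with the root's initial prefix acceptance probability set to $\tilde p_r$ instead of $1$) and $N_{\rm Greedy}(T)$ that of the Greedy method (both defined in the context). Then $$\mathbb{E}_T[N_{\rm Mod}(T)]\ \ge\ \tilde p_r\cdot\mathbb{E}_T[N_{\rm Greedy}(T)],$$ where the expectations are over the draft tree and the internal randomness of the procedures.
   Context: Let $\Sigma$ be a finite vocabulary; $\mathcal{M}_b(\cdot\mid x)$ (target) and $\mathcal{M}_s(\cdot\mid x)$ (draft) are conditional distributions on $\Sigma$ for every context $x$. $[x]_+=\max\{x,0\}$. Draft tree: fixed rooted topology (root $r$ at depth $0$, representing the current context); each non-root node carries a token and is identified with the token sequence on the path from $r$; $\mathcal{M}_b(\cdot\mid v),\mathcal{M}_s(\cdot\mid v)$ condition on that sequence. Greedy sampling, top-down: a non-leaf $v$ with $m$ children has children $\mathcal{C}(v)=\{u_1,\dots,u_m\}$, where $u_1,\dots,u_{m-1}$ are the $m-1$ most probable tokens under $\mathcal{M}_s(\cdot\mid v)$ (set $H_v$, ties broken by a fixed rule) and $u_m\sim\mathcal{M}_s^\neg(\cdot\mid v)$, with $\mathcal{M}_s^\neg(x\mid v)=\mathcal{M}_s(x\mid v)/\sum_{y\notin H_v}\mathcal{M}_s(y\mid v)$ for $x\notin H_v$ and $0$ for $x\in H_v$. For $\tilde p\in[0,1]$ and non-leaf $v$: $Z_v(\tilde p)=1-\tilde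 p+\sum_{x\in\Sigma}[\tilde p\mathcal{M}_b(x\mid v)-\mathcal{M}_s^\neg(x\mid v)]_+$, $p_v^{\tilde p}(u_m)=\min\{1,\tilde p\mathcal{M}_b(u_m\mid v)/\mathcal{M}_s^\neg(u_m\mid v)\}$, for $u\in\Sigma\setminus\{u_m\}$, $p_v^{\tilde p}(u)=[\tilde p\mathcal{M}_b(u\mid v)-\mathcal{M}_s^\neg(u\mid v)]_+(1-p_v^{\tilde p}(u_m))/Z_v(\tilde p)$, and $p_v^{\tilde p}(\neg v)=1-\sum_{u\in\Sigma}p_v^{\tilde p}(u)$. Modified UniVer: Allocation Phase starts from the given $\tilde p_r$ and, top-down, sets $p_v(\cdot)=p_v^{\tilde p_v}(\cdot)$, $\tilde p_{u_j}=p_v(u_j)/(1-\sum_{i<j}p_v(u_i))$ ($j=1,\dots,m$), $\tilde p_v^{\rm res}=1-p_v(\neg v)/(1-\sum_{i=1}^m p_v(u_i))$. Decision Phase: independent $\eta_v\sim U(0,1)$; visit nodes in post-order (recursively the subtrees of $u_1,\dots,u_m$ in order, then the node); stop at the first leaf $v$ with $\eta_v<\tilde p_v$ or non-leaf $v$ with $\eta_v<\tilde p_v^{\rm res}$. $N_{\rm Mod}(T)$ is the depth of the node at which it stops, and $0$ if every node is rejected. Greedy method: start at $c=r$. If $c$ is a leaf, stop. Otherwise sample one token $y\in\Sigma$ with probability $p_c^{1}(y)$ (the formulas above with $\tilde p=1$); if $y\in\mathcal{C}(c)$, set $c=y$ and repeat; otherwise stop. $N_{\rm Greedy}(T)$ is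 the depth of the node at which it stops. *)

theory Defs
  imports "HOL-Probability.Probability"
begin

text \<open>Fixed rooted topology: a node is given by the (ordered) list of its children.\<close>
datatype shape = Sh "shape list"

text \<open>Sampled draft tree: each child carries its token; the node's token sequence is
  the list of tokens along the path from the root (the root is the empty sequence).\<close>
datatype 'a dtree = DT "('a \<times> 'a dtree) list"

text \<open>Every node of the topology has at most as many children as there are tokens
  (needed so that the m-1 most probable tokens exist and u_m can be drawn outside them).\<close>
fun shape_ok :: "nat \<Rightarrow> shape \<Rightarrow> bool" where
  "shape_ok n (Sh cs) = (length cs \<le> n \<and> (\<forall>c\<in>set cs. shape_ok n c))"

text \<open>The residual draft distribution M_s^neg(. | v) outside the set H.
  Convention if the draft mass outside H is 0: uniform on the complement of H.\<close>
definition msneg :: "('a::finite list \<Rightarrow> 'a pmf) \<Rightarrow> 'a list \<Rightarrow> 'a set \<Rightarrow> 'a \<Rightarrow> real" where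
  "msneg Ms v H x =
     (if x \<in> H then 0
      else (let s = (\<Sum>y\<in>-H. pmf (Ms v) y)
            in if s > 0 then pmf (Ms v) x / s else 1 / real (card (- H))))"

definition msneg_pmf :: "('a::finite list \<Rightarrow> 'a pmf) \<Rightarrow> 'a list \<Rightarrow> 'a set \<Rightarrow> 'a pmf" where
  "msneg_pmf Ms v H = embed_pmf (msneg Ms v H)"

definition Zv :: "('a::finite list \<Rightarrow> 'a pmf) \<Rightarrow> ('a list \<Rightarrow> 'a pmf) \<Rightarrow> 'a list \<Rightarrow> 'a set \<Rightarrow> real \<Rightarrow> real" where
  "Zv Mb Ms v H pt = 1 - pt + (\<Sum>x\<in>UNIV. max 0 (pt * pmf (Mb v) x - msneg Ms v H x))"

text \<open>p_v^pt(u), where um is the sampled last child u_m and H = H_v.\<close>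
definition pv :: "('a::finite list \<Rightarrow> 'a pmf) \<Rightarrow> ('a list \<Rightarrow> 'a pmf) \<Rightarrow> 'a list \<Rightarrow> 'a set \<Rightarrow> 'a
                  \<Rightarrow> real \<Rightarrow> 'a \<Rightarrow> real" where
  "pv Mb Ms v H um pt u =
     (let a = min 1 (pt * pmf (Mb v) um / msneg Ms v H um)
      in if u = um then a
         else max 0 (pt * pmf (Mb v) u - msneg Ms v H u) * (1 - a) / Zv Mb Ms v H pt)"

primrec seq_pmf :: "'b pmf list \<Rightarrow> 'b list pmf" where
  "seq_pmf [] = return_pmf []"
| "seq_pmf (p # ps) = bind_pmf p (\<lambda>x. map_pmf (\<lambda>xs. x # xs) (seq_pmf ps))"

text \<open>topk v k: the k most probable tokens under M_s(. | v), in order of decreasing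
  probability, ties broken by a fixed rule (a parameter of the theorem).\<close>
function sample_tree :: "('a::finite list \<Rightarrow> 'a pmf) \<Rightarrow> ('a list \<Rightarrow> nat \<Rightarrow> 'a list)
                          \<Rightarrow> 'a list \<Rightarrow> shape \<Rightarrow> 'a dtree pmf" where
  "sample_tree Ms topk v (Sh cs) =
     (if cs = [] then return_pmf (DT [])
      else (let hs = topk v (length cs - 1) in
            bind_pmf (msneg_pmf Ms v (set hs)) (\<lambda>um.
              let us = hs @ [um] in
              map_pmf (\<lambda>ts. DT (zip us ts))
                (seq_pmf (map (\<lambda>j. sample_tree Ms topk (v @ [us ! j]) (cs ! j)) [0..<length cs])))))"
  by pat_completeness auto
termination
  by (relation "Wellfounded.measure (\<lambda>(_, _, _, s). size s)")
     (auto intro: le_imp_less_Suc nth_mem size_list_estimation' order_refl)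

lemma pair_size_lt: "(x, t) \<in> set cs \<Longrightarrow> (g::'b \<Rightarrow> nat) t < Suc (size_list (size_prod (\<lambda>_. 0) g) cs)"
proof -
  assume "(x, t) \<in> set cs"
  then have "size_prod (\<lambda>_. 0) g (x, t) \<le> size_list (size_prod (\<lambda>_. 0) g) cs"
    by (rule size_list_estimation') simp
  then show ?thesis by simp
qed

text \<open>Post-order search: return the first accepted result among the children's subtrees,
  otherwise the node's own test.\<close>
primrec first_some :: "'b option pmf list \<Rightarrow> 'b option pmf \<Rightarrow> 'b option pmf" where
  "first_some [] q = q"
| "first_some (x # xs) q =
     bind_pmf x (\<lambda>r. case r of Some y \<Rightarrow> return_pmf (Some y) | None \<Rightarrow> first_some xs q)"

text \<open>Acceptance test eta_v < p with eta_v ~ U(0,1) independent: Bernoulli(p) (clamped).\<close>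
definition accept_test :: "real \<Rightarrow> nat \<Rightarrow> nat option pmf" where
  "accept_test p d = map_pmf (\<lambda>b. if b then Some d else None) (bernoulli_pmf p)"

text \<open>univer_dec Mb Ms pt v d T: allocation (starting from pt at the node with token
  sequence v at depth d) followed by the decision phase on the subtree T; returns the
  depth of the stopping node, or None if every node is rejected.\<close>
function univer_dec :: "('a::finite list \<Rightarrow> 'a pmf) \<Rightarrow> ('a list \<Rightarrow> 'a pmf) \<Rightarrow> real
                          \<Rightarrow> 'a list \<Rightarrow> nat \<Rightarrow> 'a dtree \<Rightarrow> nat option pmf" where
  "univer_dec Mb Ms pt v d (DT cs) =
     (if cs = [] then accept_test pt d
      else (let us = map fst cs; m = length cs; H = set (butlast us); um = last us;
                p = pv Mb Ms v H um pt;
                pchild = (\<lambda>j. p (us ! j) / (1 - (\<Sum>i<j. p (us ! i))));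
                pnot = 1 - (\<Sum>u\<in>UNIV. p u);
                pres = 1 - pnot / (1 - (\<Sum>i<m. p (us ! i)))
            in first_some
                 (map (\<lambda>j. univer_dec Mb Ms (pchild j) (v @ [us ! j]) (Suc d) (snd (cs ! j))) [0..<m])
                 (accept_test pres d)))"
  by pat_completeness auto
termination
  by (relation "Wellfounded.measure (\<lambda>(_, _, _, _, _, t). size t)")
     (auto intro!: pair_size_lt[of "fst (cs ! j)" "snd (cs ! j)" for cs j] nth_mem)

definition N_Mod :: "('a::finite list \<Rightarrow> 'a pmf) \<Rightarrow> ('a list \<Rightarrow> 'a pmf) \<Rightarrow> real
                      \<Rightarrow> 'a dtree \<Rightarrow> nat pmf" where
  "N_Mod Mb Ms pr T = map_pmf (\<lambda>r. case r of None \<Rightarrow> 0 | Some d \<Rightarrow> d) (univer_dec Mb Ms pr [] 0 T)"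

text \<open>Distribution on tokens plus the extra outcome "not v" (None), with weights w;
  valid whenever the weights are nonnegative with total at most 1 (otherwise junk).\<close>
definition token_or_stop_pmf :: "('a::finite \<Rightarrow> real) \<Rightarrow> 'a option pmf" where
  "token_or_stop_pmf w =
     embed_pmf (\<lambda>z. if (\<forall>x. 0 \<le> w x) \<and> (\<Sum>x\<in>UNIV. w x) \<le> 1
                    then (case z of None \<Rightarrow> 1 - (\<Sum>x\<in>UNIV. w x) | Some x \<Rightarrow> w x)
                    else (case z of None \<Rightarrow> 1 | Some _ \<Rightarrow> 0))"

function greedy :: "('a::finite list \<Rightarrow> 'a pmf) \<Rightarrow> ('a list \<Rightarrow> 'a pmf)
                     \<Rightarrow> 'a list \<Rightarrow> nat \<Rightarrow> 'a dtree \<Rightarrow> nat pmf" where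
  "greedy Mb Ms v d (DT cs) =
     (if cs = [] then return_pmf d
      else (let us = map fst cs; H = set (butlast us); um = last us in
            bind_pmf (token_or_stop_pmf (pv Mb Ms v H um 1)) (\<lambda>y.
              case y of None \<Rightarrow> return_pmf d
              | Some x \<Rightarrow> (case map_of cs x of None \<Rightarrow> return_pmf d
                          | Some t \<Rightarrow> greedy Mb Ms (v @ [x]) (Suc d) t))))"
  by pat_completeness auto
termination
  by (relation "Wellfounded.measure (\<lambda>(_, _, _, _, t). size t)")
     (auto intro: pair_size_lt map_of_SomeD)

definition N_Greedy :: "('a::finite list \<Rightarrow> 'a pmf) \<Rightarrow> ('a list \<Rightarrow> 'a pmf) \<Rightarrow> 'a dtree \<Rightarrow> nat pmf" where
  "N_Greedy Mb Ms T = greedy Mb Ms [] 0 T"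

end

theory Submission
  imports Defs
begin

text \<open>
  The proof is an induction over the draft-tree topology. For modified UniVer started at a node
  with prefix acceptance probability \<open>p\<close> the invariant is twofold: it rejects the whole subtree
  with probability exactly \<open>1 - p\<close>, and its expected acceptance depth is at least \<open>p\<close> times the
  expected depth reached by Greedy from that node.

  At a node with children \<open>u\<^sub>1, \<dots>, u\<^sub>m\<close> the subtree of \<open>u\<^sub>j\<close> is searched only after all earlier
  subtrees were rejected, which by the first invariant happens with probability
  \<open>1 - (\<Sum>i<j. p\<^sub>v(u\<^sub>i))\<close>; so the conditional probabilities \<open>p\<^sub>u\<^sub>j\<close> turn back into the
  allocation \<open>p\<^sub>v\<close>. Averaged over the sampled last child \<open>u\<^sub>m\<close>, the allocation hands out exactly
  \<open>p\<close>, gives each drafted top token \<open>h\<close> exactly \<open>p M\<^sub>b(h | v)\<close>, i.e. \<open>p\<close> times what Greedy gives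
  it, and gives \<open>u\<^sub>m\<close> at least \<open>p\<close> times its Greedy probability, because
  \<open>min 1 (p x) \<ge> p min 1 x\<close>. Since the Greedy depth below every child exceeds the current depth,
  these weights yield the second invariant.
\<close>

section \<open>Finite distributions and sequential search\<close>

lemma nn_integral_measure_pmf_UNIV:
  "(\<integral>\<^sup>+x. f x \<partial>measure_pmf (M::'a::finite pmf)) = (\<Sum>x\<in>UNIV. f x * pmf M x)"
  by (rule nn_integral_measure_pmf_support) auto

lemma nn_integral_measure_pmf_ennreal_mult:
  fixes M :: "'a::finite pmf"
  assumes "\<And>x. 0 \<le> f x"
  shows "(\<integral>\<^sup>+x. ennreal (f x) * c \<partial>measure_pmf M) = ennreal (\<Sum>x\<in>UNIV. pmf M x * f x) * c"
proof -
  have "(\<integral>\<^sup>+x. ennreal (f x) * c \<partial>measure_pmf M) = (\<Sum>x\<in>UNIV. ennreal (pmf M x * f x)) * c"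
    using assms by (simp add: nn_integral_measure_pmf_UNIV sum_distrib_right sum_distrib_left ennreal_mult' mult_ac)
  also have "(\<Sum>x\<in>UNIV. ennreal (pmf M x * f x)) = ennreal (\<Sum>x\<in>UNIV. pmf M x * f x)"
    using assms by (intro sum_ennreal) auto
  finally show ?thesis .
qed

lemma sum_nth_distinct:
  "distinct us \<Longrightarrow> j \<le> length us \<Longrightarrow> (\<Sum>i<j. f (us!i)) = sum f (nth us ` {..<j})"
  by (subst sum.reindex) (auto intro!: inj_on_nth)

lemma sum_nth_distinct_le:
  fixes f :: "'a::finite \<Rightarrow> real"
  shows "distinct us \<Longrightarrow> j \<le> length us \<Longrightarrow> (\<And>u. 0 \<le> f u) \<Longrightarrow> (\<Sum>i<j. f (us!i)) \<le> (\<Sum>u\<in>UNIV. f u)"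
  by (subst sum_nth_distinct) (auto intro!: sum_mono2)

lemma sum_nth_distinct_set: "distinct us \<Longrightarrow> (\<Sum>i<length us. f (us!i)) = sum f (set us)"
  by (subst sum_nth_distinct) (auto simp: in_set_conv_nth intro!: sum.cong)

lemma first_some_Cons_nn_integral:
  assumes "f None = 0"
  shows "(\<integral>\<^sup>+r. f r \<partial>measure_pmf (first_some (x#xs) q)) =
     (\<integral>\<^sup>+r. f r \<partial>measure_pmf x) + ennreal (pmf x None) * (\<integral>\<^sup>+r. f r \<partial>measure_pmf (first_some xs q))"
proof -
  let ?I = "\<integral>\<^sup>+r. f r \<partial>measure_pmf (first_some xs q)"
  have "(\<integral>\<^sup>+r. f r \<partial>measure_pmf (first_some (x#xs) q)) =
      (\<integral>\<^sup>+r. f r + ?I * indicator {None} r \<partial>measure_pmf x)"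
    using assms by (auto intro!: nn_integral_cong split: option.split)
  also have "\<dots> = (\<integral>\<^sup>+r. f r \<partial>measure_pmf x) + ?I * ennreal (pmf x None)"
    by (simp add: nn_integral_add emeasure_pmf_single)
  finally show ?thesis by (simp add: mult.commute)
qed

lemma first_some_nn_integral:
  assumes "f None = 0"
  shows "(\<integral>\<^sup>+r. f r \<partial>measure_pmf (first_some xs q)) =
     (\<Sum>j<length xs. ennreal (\<Prod>i<j. pmf (xs!i) None) * (\<integral>\<^sup>+r. f r \<partial>measure_pmf (xs!j)))
     + ennreal (\<Prod>i<length xs. pmf (xs!i) None) * (\<integral>\<^sup>+r. f r \<partial>measure_pmf q)"
proof (induction xs)
  case Nil
  then show ?case by simp
next
  case (Cons x xs)
  show ?case
    unfolding first_some_Cons_nn_integral[of f, OF assms] Cons.IH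
    by (simp add: sum.lessThan_Suc_shift prod.lessThan_Suc_shift distrib_left sum_distrib_left
        ennreal_mult' prod_nonneg mult.assoc add.assoc del: sum.lessThan_Suc prod.lessThan_Suc)
qed

lemma pmf_first_some_None:
  "pmf (first_some xs q) None = (\<Prod>i<length xs. pmf (xs!i) None) * pmf q None"
proof (induction xs)
  case (Cons x xs)
  have "ennreal (pmf (first_some (x # xs) q) None) =
      (\<integral>\<^sup>+r. ennreal (pmf (first_some xs q) None) * indicator {None} r \<partial>measure_pmf x)"
    unfolding first_some.simps ennreal_pmf_bind by (intro nn_integral_cong) (auto split: option.split)
  also have "\<dots> = ennreal (pmf x None * pmf (first_some xs q) None)"
    by (subst nn_integral_cmult_indicator) (auto simp: emeasure_pmf_single ennreal_mult' mult.commute)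
  finally have "pmf (first_some (x # xs) q) None = pmf x None * pmf (first_some xs q) None"
    by (simp add: prod_nonneg)
  then show ?case
    by (simp add: Cons.IH prod.lessThan_Suc_shift mult.assoc del: prod.lessThan_Suc)
qed simp

lemma set_pmf_first_some: "set_pmf (first_some xs q) \<subseteq> (\<Union>x\<in>set xs. set_pmf x) \<union> set_pmf q"
  by (induction xs) (auto split: option.splits)

lemma length_in_set_seq_pmf: "ts \<in> set_pmf (seq_pmf ps) \<Longrightarrow> length ts = length ps"
  by (induction ps arbitrary: ts) auto

lemma map_pmf_nth_seq_pmf: "j < length ps \<Longrightarrow> map_pmf (\<lambda>ts. ts!j) (seq_pmf ps) = ps ! j"
proof (induction ps arbitrary: j)
  case (Cons p ps)
  then show ?case
    by (cases j) (simp_all add: map_bind_pmf pmf.map_comp o_def bind_return_pmf')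
qed simp

lemma bind_seq_pmf_nth: "j < length ps \<Longrightarrow> bind_pmf (seq_pmf ps) (\<lambda>ts. f (ts!j)) = bind_pmf (ps!j) f"
  by (simp add: map_pmf_nth_seq_pmf[symmetric] bind_map_pmf)

lemma bind_seq_pmf_first_some:
  "bind_pmf (seq_pmf ps) (\<lambda>ts. first_some (map (\<lambda>j. F j (ts!j)) [0..<length ps]) q) =
   first_some (map (\<lambda>j. bind_pmf (ps!j) (F j)) [0..<length ps]) q"
proof (induction ps arbitrary: F)
  case (Cons p ps)
  let ?rest = "\<lambda>ts r. case r of Some y \<Rightarrow> return_pmf (Some y)
      | None \<Rightarrow> first_some (map (\<lambda>j. F (Suc j) (ts!j)) [0..<length ps]) q"
  have "bind_pmf (seq_pmf (p#ps)) (\<lambda>ts. first_some (map (\<lambda>j. F j (ts!j)) [0..<length (p#ps)]) q)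
     = bind_pmf p (\<lambda>x. bind_pmf (seq_pmf ps) (\<lambda>ts. bind_pmf (F 0 x) (?rest ts)))"
    by (simp add: map_upt_Suc bind_map_pmf o_def bind_assoc_pmf del: upt_Suc)
  also have "\<dots> = bind_pmf p (\<lambda>x. bind_pmf (F 0 x) (\<lambda>r. bind_pmf (seq_pmf ps) (\<lambda>ts. ?rest ts r)))"
    by (subst bind_commute_pmf) rule
  also have "\<dots> = bind_pmf p (\<lambda>x. bind_pmf (F 0 x) (\<lambda>r. case r of Some y \<Rightarrow> return_pmf (Some y)
      | None \<Rightarrow> first_some (map (\<lambda>j. bind_pmf (ps!j) (F (Suc j))) [0..<length ps]) q))"
    by (intro bind_pmf_cong refl) (auto split: option.split simp: Cons.IH[of "\<lambda>j. F (Suc j)"])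
  also have "\<dots> = first_some (map (\<lambda>j. bind_pmf ((p#ps)!j) (F j)) [0..<length (p#ps)]) q"
    by (simp add: map_upt_Suc bind_assoc_pmf del: upt_Suc)
  finally show ?case .
qed simp

lemma map_of_zip_nth_index:
  assumes "length ts = length us"
  shows "map_of (zip us ts) x = map_option ((!) ts) (map_of (zip us [0..<length us]) x)"
proof -
  have "zip us ts = map (\<lambda>(u, j). (u, ts ! j)) (zip us [0..<length us])"
    using assms by (metis map_nth zip_map2)
  then show ?thesis
    by (simp add: map_of_map)
qed

lemma map_of_zip_upt_SomeD: "map_of (zip us [0..<n]) x = Some j \<Longrightarrow> j < n \<and> us ! j = x"
  by (auto dest!: map_of_SomeD simp: in_set_zip)

definition stop_depth :: "nat option \<Rightarrow> ennreal" where
  "stop_depth r = (case r of None \<Rightarrow> 0 | Some n \<Rightarrow> of_nat n)"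

lemma stop_depth_None [simp]: "stop_depth None = 0"
  by (simp add: stop_depth_def)

abbreviation mean_stop_depth :: "nat option pmf \<Rightarrow> ennreal" where
  "mean_stop_depth X \<equiv> \<integral>\<^sup>+ r. stop_depth r \<partial>measure_pmf X"

abbreviation mean_depth :: "nat pmf \<Rightarrow> ennreal" where
  "mean_depth X \<equiv> \<integral>\<^sup>+ n. of_nat n \<partial>measure_pmf X"

lemma pmf_accept_test_None:
  assumes "0 \<le> q" "q \<le> 1"
  shows "pmf (accept_test q d) None = 1 - q"
proof -
  have "{b. (if b then Some d else None) = None} = {False}"
    by auto
  then show ?thesis
    unfolding accept_test_def using assms by (simp add: pmf_map vimage_def measure_pmf_single)
qed

lemma mean_stop_depth_accept_test:
  "0 \<le> q \<Longrightarrow> q \<le> 1 \<Longrightarrow> mean_stop_depth (accept_test q d) = ennreal q * of_nat d"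
  unfolding accept_test_def
  by (simp add: nn_integral_measure_pmf_UNIV UNIV_bool stop_depth_def mult.commute)

lemma set_pmf_accept_test: "set_pmf (accept_test q d) \<subseteq> {None, Some d}"
  unfolding accept_test_def by auto

lemma pmf_token_or_stop_pmf:
  assumes "\<And>x. 0 \<le> w x" "(\<Sum>x\<in>UNIV. w x) \<le> 1"
  shows "pmf (token_or_stop_pmf w) z = (case z of None \<Rightarrow> 1 - (\<Sum>x\<in>UNIV. w x) | Some x \<Rightarrow> w x)"
proof -
  let ?f = "\<lambda>z. case z of None \<Rightarrow> 1 - (\<Sum>x\<in>UNIV. w x) | Some x \<Rightarrow> w x"
  have nonneg: "\<And>z. 0 \<le> ?f z"
    using assms by (auto split: option.split)
  have "(\<Sum>z\<in>UNIV. ?f z) = 1"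
    by (simp add: UNIV_option_conv sum.reindex)
  then have "(\<integral>\<^sup>+ z. ennreal (?f z) \<partial>count_space UNIV) = 1"
    using nonneg by (simp add: nn_integral_count_space_finite sum_ennreal)
  then show ?thesis
    unfolding token_or_stop_pmf_def using assms nonneg by (simp add: pmf_embed_pmf)
qed

lemma nn_integral_token_or_stop_pmf:
  assumes "\<And>x. 0 \<le> w x" "(\<Sum>x\<in>UNIV. w x) \<le> 1"
  shows "(\<integral>\<^sup>+ y. f y \<partial>measure_pmf (token_or_stop_pmf w)) =
     f None * ennreal (1 - (\<Sum>x\<in>UNIV. w x)) + (\<Sum>x\<in>UNIV. f (Some x) * ennreal (w x))"
  by (simp add: nn_integral_measure_pmf_UNIV pmf_token_or_stop_pmf[OF assms] UNIV_option_conv sum.reindex)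

section \<open>The allocation at a node\<close>

definition surplus :: "('a::finite list \<Rightarrow> 'a pmf) \<Rightarrow> ('a list \<Rightarrow> 'a pmf) \<Rightarrow> 'a list \<Rightarrow> 'a set \<Rightarrow> real \<Rightarrow> real" where
  "surplus Mb Ms v H p = (\<Sum>x\<in>UNIV. max 0 (p * pmf (Mb v) x - msneg Ms v H x))"

definition last_accept :: "('a::finite list \<Rightarrow> 'a pmf) \<Rightarrow> ('a list \<Rightarrow> 'a pmf) \<Rightarrow> 'a list \<Rightarrow> 'a set \<Rightarrow> 'a \<Rightarrow> real \<Rightarrow> real" where
  "last_accept Mb Ms v H um p = min 1 (p * pmf (Mb v) um / msneg Ms v H um)"

lemma surplus_nonneg: "0 \<le> surplus Mb Ms v H p"
  unfolding surplus_def by (auto intro: sum_nonneg)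

lemma msneg_nonneg: "0 \<le> msneg Ms v H x"
  unfolding msneg_def Let_def by (auto intro!: divide_nonneg_pos)

lemma last_accept_range: "0 \<le> p \<Longrightarrow> 0 \<le> last_accept Mb Ms v H um p \<and> last_accept Mb Ms v H um p \<le> 1"
  unfolding last_accept_def using msneg_nonneg[of Ms v H um] by auto

lemma pv_eq: "pv Mb Ms v H um p u = (if u = um then last_accept Mb Ms v H um p
   else max 0 (p * pmf (Mb v) u - msneg Ms v H u) * (1 - last_accept Mb Ms v H um p) / (1 - p + surplus Mb Ms v H p))"
  unfolding pv_def last_accept_def Zv_def surplus_def Let_def by simp

lemma pv_nonneg: "0 \<le> p \<Longrightarrow> p \<le> 1 \<Longrightarrow> 0 \<le> pv Mb Ms v H um p u"
  using last_accept_range[of p Mb Ms v H um] surplus_nonneg[of Mb Ms v H p] by (auto simp: pv_eq)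

lemma pv_last_accept_mono:
  assumes "0 \<le> p" "p \<le> 1"
  shows "p * pv Mb Ms v H um 1 um \<le> pv Mb Ms v H um p um"
proof -
  have "p * min 1 (pmf (Mb v) um / msneg Ms v H um) = min p (p * pmf (Mb v) um / msneg Ms v H um)"
    using assms by (simp add: min_mult_distrib_left)
  also have "\<dots> \<le> min 1 (p * pmf (Mb v) um / msneg Ms v H um)"
    using assms by auto
  finally show ?thesis
    by (simp add: pv_eq last_accept_def)
qed

lemma sum_msneg_last_accept:
  assumes "0 \<le> p"
  shows "(\<Sum>um\<in>UNIV. msneg Ms v H um * last_accept Mb Ms v H um p) = p - surplus Mb Ms v H p"
proof -
  have "msneg Ms v H um * last_accept Mb Ms v H um p = min (msneg Ms v H um) (p * pmf (Mb v) um)" for um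
    using assms msneg_nonneg[of Ms v H um]
    by (cases "msneg Ms v H um = 0") (auto simp: last_accept_def min_mult_distrib_left min_def)
  then have "(\<Sum>um\<in>UNIV. msneg Ms v H um * last_accept Mb Ms v H um p)
      = (\<Sum>um\<in>UNIV. p * pmf (Mb v) um - max 0 (p * pmf (Mb v) um - msneg Ms v H um))"
    by (auto intro!: sum.cong simp: min_def max_def)
  also have "\<dots> = p * (\<Sum>um\<in>UNIV. pmf (Mb v) um) - surplus Mb Ms v H p"
    unfolding surplus_def by (simp add: sum_subtractf sum_distrib_left)
  finally show ?thesis
    by (simp add: sum_pmf_eq_1)
qed

lemma sum_pv:
  fixes Mb :: "'a::finite list \<Rightarrow> 'a pmf"
  assumes p: "0 \<le> p" "p \<le> 1" and um: "0 < msneg Ms v H um"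
  defines "A \<equiv> last_accept Mb Ms v H um p" and "S \<equiv> surplus Mb Ms v H p"
  shows "(\<Sum>u\<in>UNIV. pv Mb Ms v H um p u) = A + (1 - A) * (S / (1 - p + S))"
proof -
  let ?f = "\<lambda>u. max 0 (p * pmf (Mb v) u - msneg Ms v H u)"
  have "(\<Sum>u\<in>UNIV. pv Mb Ms v H um p u) = pv Mb Ms v H um p um + (\<Sum>u\<in>UNIV-{um}. pv Mb Ms v H um p u)"
    by (simp add: sum.remove)
  also have "\<dots> = A + (\<Sum>u\<in>UNIV-{um}. ?f u) * (1 - A) / (1 - p + S)"
    by (simp add: pv_eq A_def S_def sum_divide_distrib sum_distrib_right)
  also have "(\<Sum>u\<in>UNIV-{um}. ?f u) * (1 - A) = S * (1 - A)"
  proof (cases "A < 1")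
    case True
    then have "p * pmf (Mb v) um < msneg Ms v H um"
      using um by (auto simp: A_def last_accept_def min_def divide_less_eq split: if_splits)
    then have "S = (\<Sum>u\<in>UNIV-{um}. ?f u)"
      unfolding S_def surplus_def by (simp add: sum.remove[of UNIV um])
    then show ?thesis
      by simp
  next
    case False
    then show ?thesis
      using last_accept_range[OF p(1), of Mb Ms v H um] by (simp add: A_def)
  qed
  finally show ?thesis
    by simp
qed

lemma sum_pv_le_1:
  assumes p: "0 \<le> p" "p \<le> 1" and um: "0 < msneg Ms v H um"
  shows "(\<Sum>u\<in>UNIV. pv Mb Ms v H um p u) \<le> 1"
proof -
  let ?A = "last_accept Mb Ms v H um p" and ?S = "surplus Mb Ms v H p"
  have "?S / (1 - p + ?S) \<le> 1"
    using surplus_nonneg[of Mb Ms v H p] p by (cases "1 - p + ?S = 0") (auto simp: divide_le_eq)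
  moreover have "0 \<le> 1 - ?A"
    using last_accept_range[OF p(1), of Mb Ms v H um] by simp
  ultimately have "(1 - ?A) * (?S / (1 - p + ?S)) \<le> 1 - ?A"
    using mult_left_mono by fastforce
  then show ?thesis
    using sum_pv[OF p um] by simp
qed

lemma nn_integral_pv_last_mono:
  assumes "0 \<le> p" "p \<le> 1"
  shows "(\<integral>\<^sup>+ um. ennreal p * (ennreal (pv Mb Ms v H um 1 um) * g um) \<partial>M)
    \<le> (\<integral>\<^sup>+ um. ennreal (pv Mb Ms v H um p um) * g um \<partial>M)"
proof (intro nn_integral_mono)
  fix um
  have "ennreal p * ennreal (pv Mb Ms v H um 1 um) \<le> ennreal (pv Mb Ms v H um p um)"
    using pv_last_accept_mono[OF assms, of Mb Ms v H um] assms(1) by (simp add: ennreal_leI flip: ennreal_mult')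
  then show "ennreal p * (ennreal (pv Mb Ms v H um 1 um) * g um) \<le> ennreal (pv Mb Ms v H um p um) * g um"
    by (simp add: mult.assoc[symmetric] mult_right_mono)
qed

context
  fixes Mb Ms :: "'a::finite list \<Rightarrow> 'a pmf" and v :: "'a list" and H :: "'a set"
  assumes H_ne_UNIV: "H \<noteq> UNIV"
begin

lemma sum_msneg: "(\<Sum>x\<in>UNIV. msneg Ms v H x) = 1"
proof -
  have "(\<Sum>x\<in>UNIV. msneg Ms v H x) = (\<Sum>x\<in>-H. msneg Ms v H x)"
    by (rule sum.mono_neutral_right) (auto simp: msneg_def)
  also have "\<dots> = 1"
  proof (cases "(\<Sum>y\<in>-H. pmf (Ms v) y) > 0")
    case True
    then show ?thesis
      by (simp add: msneg_def sum_divide_distrib[symmetric])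
  next
    case False
    have "-H \<noteq> {}"
      using H_ne_UNIV by auto
    then show ?thesis
      using False by (simp add: msneg_def)
  qed
  finally show ?thesis .
qed

lemma pmf_msneg_pmf: "pmf (msneg_pmf Ms v H) x = msneg Ms v H x"
  unfolding msneg_pmf_def
proof (rule pmf_embed_pmf)
  have "(\<Sum>x\<in>UNIV. ennreal (msneg Ms v H x)) = 1"
    by (simp add: sum_ennreal msneg_nonneg sum_msneg)
  then show "(\<integral>\<^sup>+ x. ennreal (msneg Ms v H x) \<partial>count_space UNIV) = 1"
    by (simp add: nn_integral_count_space_finite)
qed (rule msneg_nonneg)

lemma set_pmf_msneg_pmf: "um \<in> set_pmf (msneg_pmf Ms v H) \<longleftrightarrow> 0 < msneg Ms v H um"
  using msneg_nonneg[of Ms v H um] by (auto simp: set_pmf_iff pmf_msneg_pmf)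

lemma notin_set_pmf_msneg_pmf: "um \<in> set_pmf (msneg_pmf Ms v H) \<Longrightarrow> um \<notin> H"
  by (auto simp: set_pmf_msneg_pmf msneg_def)

lemma sum_msneg_sum_pv:
  assumes p: "0 \<le> p" "p \<le> 1"
  shows "(\<Sum>um\<in>UNIV. msneg Ms v H um * (\<Sum>u\<in>UNIV. pv Mb Ms v H um p u)) = p"
proof -
  let ?A = "\<lambda>um. last_accept Mb Ms v H um p"
  let ?S = "surplus Mb Ms v H p"
  let ?Z = "1 - p + ?S"
  have "msneg Ms v H um * (\<Sum>u\<in>UNIV. pv Mb Ms v H um p u)
      = msneg Ms v H um * ?A um + msneg Ms v H um * (1 - ?A um) * (?S / ?Z)" for um
  proof (cases "msneg Ms v H um = 0")
    case False
    then show ?thesis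
      using msneg_nonneg[of Ms v H um] sum_pv[OF p, where um = um] by (simp add: distrib_left mult.assoc)
  qed simp
  then have "(\<Sum>um\<in>UNIV. msneg Ms v H um * (\<Sum>u\<in>UNIV. pv Mb Ms v H um p u))
      = (\<Sum>um\<in>UNIV. msneg Ms v H um * ?A um) + (\<Sum>um\<in>UNIV. msneg Ms v H um * (1 - ?A um)) * (?S / ?Z)"
    by (simp only: sum.distrib sum_distrib_right)
  also have "(\<Sum>um\<in>UNIV. msneg Ms v H um * (1 - ?A um)) = ?Z"
    by (simp add: right_diff_distrib sum_subtractf sum_msneg sum_msneg_last_accept p)
  also have "(\<Sum>um\<in>UNIV. msneg Ms v H um * ?A um) = p - ?S"
    by (simp add: sum_msneg_last_accept p)
  also have "?Z * (?S / ?Z) = ?S"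
    using surplus_nonneg[of Mb Ms v H p] p by (cases "?Z = 0") auto
  finally show ?thesis
    by simp
qed

lemma sum_msneg_pv_top:
  assumes p: "0 \<le> p" "p \<le> 1" and h: "h \<in> H"
  shows "(\<Sum>um\<in>UNIV. msneg Ms v H um * pv Mb Ms v H um p h) = p * pmf (Mb v) h"
proof -
  let ?A = "\<lambda>um. last_accept Mb Ms v H um p"
  let ?S = "surplus Mb Ms v H p"
  let ?Z = "1 - p + ?S"
  have msneg_h: "msneg Ms v H h = 0"
    using h by (simp add: msneg_def)
  have "msneg Ms v H um * pv Mb Ms v H um p h
      = msneg Ms v H um * (1 - ?A um) * (p * pmf (Mb v) h / ?Z)" for um
    using msneg_nonneg[of Ms v H um] msneg_h p
    by (cases "msneg Ms v H um = 0") (auto simp: pv_eq mult_ac)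
  then have "(\<Sum>um\<in>UNIV. msneg Ms v H um * pv Mb Ms v H um p h)
      = (\<Sum>um\<in>UNIV. msneg Ms v H um * (1 - ?A um)) * (p * pmf (Mb v) h / ?Z)"
    by (simp only: sum_distrib_right)
  also have "(\<Sum>um\<in>UNIV. msneg Ms v H um * (1 - ?A um)) = ?Z"
    by (simp add: right_diff_distrib sum_subtractf sum_msneg sum_msneg_last_accept p)
  also have "?Z * (p * pmf (Mb v) h / ?Z) = p * pmf (Mb v) h"
  proof (cases "?Z = 0")
    case True
    have "max 0 (p * pmf (Mb v) h - msneg Ms v H h) \<le> ?S"
      unfolding surplus_def by (rule member_le_sum) auto
    moreover have "?S = 0"
      using True surplus_nonneg[of Mb Ms v H p] p by linarith
    ultimately have "p * pmf (Mb v) h \<le> 0"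
      using msneg_h by simp
    then have "p * pmf (Mb v) h = 0"
      using mult_nonneg_nonneg[OF p(1) pmf_nonneg[of "Mb v" h]] by linarith
    then show ?thesis
      by simp
  qed simp
  finally show ?thesis .
qed


lemma nn_integral_msneg_sum_pv:
  assumes "0 \<le> p" "p \<le> 1"
  shows "(\<integral>\<^sup>+ um. ennreal (\<Sum>u\<in>UNIV. pv Mb Ms v H um p u) * c \<partial>measure_pmf (msneg_pmf Ms v H)) = ennreal p * c"
  using assms by (simp add: nn_integral_measure_pmf_ennreal_mult pv_nonneg sum_nonneg pmf_msneg_pmf sum_msneg_sum_pv)

lemma nn_integral_msneg_pv_top:
  assumes "0 \<le> p" "p \<le> 1" and "h \<in> H"
  shows "(\<integral>\<^sup>+ um. ennreal p * (ennreal (pv Mb Ms v H um 1 h) * c) \<partial>measure_pmf (msneg_pmf Ms v H))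
    = (\<integral>\<^sup>+ um. ennreal (pv Mb Ms v H um p h) * c \<partial>measure_pmf (msneg_pmf Ms v H))"
proof -
  have "(\<integral>\<^sup>+ um. ennreal p * (ennreal (pv Mb Ms v H um 1 h) * c) \<partial>measure_pmf (msneg_pmf Ms v H))
      = (\<integral>\<^sup>+ um. ennreal (p * pv Mb Ms v H um 1 h) * c \<partial>measure_pmf (msneg_pmf Ms v H))"
    using assms(1) by (simp add: ennreal_mult' mult.assoc)
  also have "\<dots> = ennreal (p * (\<Sum>um\<in>UNIV. msneg Ms v H um * pv Mb Ms v H um 1 h)) * c"
    using assms
    by (subst nn_integral_measure_pmf_ennreal_mult) (simp_all add: pv_nonneg pmf_msneg_pmf sum_distrib_left mult_ac)
  also have "\<dots> = (\<integral>\<^sup>+ um. ennreal (pv Mb Ms v H um p h) * c \<partial>measure_pmf (msneg_pmf Ms v H))"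
    using assms by (simp add: nn_integral_measure_pmf_ennreal_mult pv_nonneg pmf_msneg_pmf sum_msneg_pv_top)
  finally show ?thesis .
qed

end

lemma nn_integral_pv_child_mono:
  assumes "set hs \<noteq> UNIV" "0 \<le> p" "p \<le> 1" "j \<le> length hs"
  shows "(\<integral>\<^sup>+ um. ennreal p * (ennreal (pv Mb Ms v (set hs) um 1 ((hs @ [um]) ! j)) * g ((hs @ [um]) ! j))
      \<partial>measure_pmf (msneg_pmf Ms v (set hs)))
    \<le> (\<integral>\<^sup>+ um. ennreal (pv Mb Ms v (set hs) um p ((hs @ [um]) ! j)) * g ((hs @ [um]) ! j)
      \<partial>measure_pmf (msneg_pmf Ms v (set hs)))"
proof (cases "j < length hs")
  case True
  then have "hs ! j \<in> set hs"
    by simp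
  with True show ?thesis
    using nn_integral_msneg_pv_top[OF assms(1-3)] by (simp add: nth_append)
next
  case False
  then show ?thesis
    using nn_integral_pv_last_mono[OF assms(2,3)] assms(4) by simp
qed

section \<open>Sequential acceptance tests\<close>

definition child_prefix_prob :: "('a \<Rightarrow> real) \<Rightarrow> 'a list \<Rightarrow> nat \<Rightarrow> real" where
  "child_prefix_prob P us j = P (us ! j) / (1 - (\<Sum>i<j. P (us ! i)))"

definition residual_prob :: "('a::finite \<Rightarrow> real) \<Rightarrow> 'a list \<Rightarrow> real" where
  "residual_prob P us = 1 - (1 - (\<Sum>u\<in>UNIV. P u)) / (1 - (\<Sum>i<length us. P (us ! i)))"

context
  fixes P :: "'a::finite \<Rightarrow> real" and us :: "'a list"
  assumes P_nonneg: "\<And>u. 0 \<le> P u" and sum_P_le_1: "(\<Sum>u\<in>UNIV. P u) \<le> 1"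
    and distinct_us: "distinct us"
begin

lemma prefix_sum_le_sum: "j \<le> length us \<Longrightarrow> (\<Sum>i<j. P (us ! i)) \<le> (\<Sum>u\<in>UNIV. P u)"
  using sum_nth_distinct_le[OF distinct_us _ P_nonneg] .

lemma prefix_sum_le_1: "j \<le> length us \<Longrightarrow> (\<Sum>i<j. P (us ! i)) \<le> 1"
  using prefix_sum_le_sum sum_P_le_1 by (rule order_trans)

lemma prefix_sum_nonneg: "0 \<le> (\<Sum>i<j. P (us ! i))"
  by (simp add: sum_nonneg P_nonneg)

lemma prefix_mass_bounds:
  assumes "j < length us"
  shows "P (us ! j) \<le> 1 - (\<Sum>i<j. P (us ! i))" "0 \<le> 1 - (\<Sum>i<j. P (us ! i))"
  using prefix_sum_le_1[of "Suc j"] prefix_sum_le_1[of j] assms by simp_all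

lemma child_prefix_prob_bounds:
  assumes "j < length us"
  shows "0 \<le> child_prefix_prob P us j" "child_prefix_prob P us j \<le> 1"
  using prefix_mass_bounds[OF assms] P_nonneg[of "us ! j"] by (auto simp: child_prefix_prob_def divide_le_eq)

lemma prefix_mass_mult_child_prefix_prob:
  assumes "j < length us"
  shows "(1 - (\<Sum>i<j. P (us ! i))) * child_prefix_prob P us j = P (us ! j)"
  using prefix_mass_bounds[OF assms] P_nonneg[of "us ! j"] by (auto simp: child_prefix_prob_def)

lemma prod_one_minus_child_prefix_prob:
  "j \<le> length us \<Longrightarrow> (\<Prod>i<j. 1 - child_prefix_prob P us i) = 1 - (\<Sum>i<j. P (us ! i))"
proof (induction j)
  case (Suc j)
  then have "(\<Prod>i<Suc j. 1 - child_prefix_prob P us i)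
      = (1 - (\<Sum>i<j. P (us ! i))) * (1 - child_prefix_prob P us j)"
    by simp
  also have "\<dots> = 1 - (\<Sum>i<Suc j. P (us ! i))"
    using prefix_mass_mult_child_prefix_prob[of j] Suc.prems by (simp add: right_diff_distrib)
  finally show ?case .
qed simp

lemma residual_prob_bounds: "0 \<le> residual_prob P us" "residual_prob P us \<le> 1"
proof -
  let ?Q = "\<Sum>i<length us. P (us ! i)"
  have "?Q \<le> (\<Sum>u\<in>UNIV. P u)"
    by (rule prefix_sum_le_sum) simp
  then show "0 \<le> residual_prob P us"
    using sum_P_le_1 by (cases "?Q = 1") (auto simp: residual_prob_def divide_le_eq)
  show "residual_prob P us \<le> 1"
    using \<open>?Q \<le> (\<Sum>u\<in>UNIV. P u)\<close> sum_P_le_1 by (simp add: residual_prob_def)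
qed

lemma prefix_mass_mult_residual_prob:
  "(1 - (\<Sum>i<length us. P (us ! i))) * residual_prob P us = (\<Sum>u\<in>UNIV. P u) - (\<Sum>i<length us. P (us ! i))"
proof (cases "(\<Sum>i<length us. P (us ! i)) = 1")
  case True
  moreover have "(\<Sum>i<length us. P (us ! i)) \<le> (\<Sum>u\<in>UNIV. P u)"
    by (rule prefix_sum_le_sum) simp
  ultimately show ?thesis
    using sum_P_le_1 by simp
qed (simp add: residual_prob_def field_simps)

context
  fixes X :: "nat \<Rightarrow> nat option pmf" and d :: nat
  assumes pmf_X_None: "\<And>j. j < length us \<Longrightarrow> pmf (X j) None = 1 - child_prefix_prob P us j"
begin

lemma prod_pmf_X_None:
  "j \<le> length us \<Longrightarrow> (\<Prod>i<j. pmf (map X [0..<length us] ! i) None) = 1 - (\<Sum>i<j. P (us ! i))"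
  by (simp add: pmf_X_None prod_one_minus_child_prefix_prob[symmetric])

lemma pmf_first_some_sequential_None:
  "pmf (first_some (map X [0..<length us]) (accept_test (residual_prob P us) d)) None
    = 1 - (\<Sum>u\<in>UNIV. P u)"
proof -
  let ?Q = "\<Sum>i<length us. P (us ! i)" and ?R = "residual_prob P us"
  have "pmf (first_some (map X [0..<length us]) (accept_test ?R d)) None = (1 - ?Q) * (1 - ?R)"
    using prod_pmf_X_None[of "length us"] residual_prob_bounds
    by (simp add: pmf_first_some_None pmf_accept_test_None)
  also have "\<dots> = 1 - (\<Sum>u\<in>UNIV. P u)"
    by (simp only: right_diff_distrib mult_1_right prefix_mass_mult_residual_prob)
  finally show ?thesis .
qed

lemma mean_stop_depth_first_some_sequential_ge:
  assumes mean_X: "\<And>j. j < length us \<Longrightarrow> ennreal (child_prefix_prob P us j) * (of_nat d + g j) \<le> mean_stop_depth (X j)"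
  shows "ennreal (\<Sum>u\<in>UNIV. P u) * of_nat d + (\<Sum>j<length us. ennreal (P (us ! j)) * g j)
    \<le> mean_stop_depth (first_some (map X [0..<length us]) (accept_test (residual_prob P us) d))"
proof -
  let ?Q = "\<lambda>j. \<Sum>i<j. P (us ! i)"
  let ?n = "length us"
  have "ennreal (\<Sum>u\<in>UNIV. P u) * of_nat d + (\<Sum>j<?n. ennreal (P (us ! j)) * g j)
      = (\<Sum>j<?n. ennreal (P (us ! j)) * (of_nat d + g j)) + ennreal ((\<Sum>u\<in>UNIV. P u) - ?Q ?n) * of_nat d"
  proof -
    have "ennreal (\<Sum>u\<in>UNIV. P u) = ennreal (?Q ?n) + ennreal ((\<Sum>u\<in>UNIV. P u) - ?Q ?n)"
      using prefix_sum_le_sum[of ?n] by (simp add: prefix_sum_nonneg flip: ennreal_plus)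
    moreover have "ennreal (?Q ?n) = (\<Sum>j<?n. ennreal (P (us ! j)))"
      by (simp add: sum_ennreal P_nonneg)
    ultimately show ?thesis
      by (simp add: distrib_left distrib_right sum.distrib sum_distrib_right add_ac)
  qed
  also have "\<dots> \<le> (\<Sum>j<?n. ennreal (1 - ?Q j) * mean_stop_depth (X j))
      + ennreal (1 - ?Q ?n) * (ennreal (residual_prob P us) * of_nat d)"
  proof (intro add_mono sum_mono)
    fix j assume "j \<in> {..<?n}"
    then have j: "j < ?n" by simp
    have "ennreal (P (us ! j)) = ennreal (1 - ?Q j) * ennreal (child_prefix_prob P us j)"
      using prefix_mass_mult_child_prefix_prob[OF j] prefix_mass_bounds(2)[OF j] by (simp flip: ennreal_mult')
    then show "ennreal (P (us ! j)) * (of_nat d + g j) \<le> ennreal (1 - ?Q j) * mean_stop_depth (X j)"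
      using mean_X[OF j] by (simp add: mult.assoc mult_left_mono)
  next
    show "ennreal ((\<Sum>u\<in>UNIV. P u) - ?Q ?n) * of_nat d
        \<le> ennreal (1 - ?Q ?n) * (ennreal (residual_prob P us) * of_nat d)"
    proof -
      have "ennreal (1 - ?Q ?n) * ennreal (residual_prob P us) = ennreal ((\<Sum>u\<in>UNIV. P u) - ?Q ?n)"
        using prefix_sum_le_1[of ?n] by (simp add: prefix_mass_mult_residual_prob flip: ennreal_mult')
      then show ?thesis
        by (simp add: mult.assoc[symmetric])
    qed
  qed
  also have "\<dots> = mean_stop_depth (first_some (map X [0..<?n]) (accept_test (residual_prob P us) d))"
    using prod_pmf_X_None residual_prob_bounds
    by (simp add: first_some_nn_integral mean_stop_depth_accept_test)
  finally show ?thesis .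
qed

end

end

section \<open>Draft trees\<close>

definition univer_tree :: "('a::finite list \<Rightarrow> 'a pmf) \<Rightarrow> ('a list \<Rightarrow> 'a pmf) \<Rightarrow> ('a list \<Rightarrow> nat \<Rightarrow> 'a list)
    \<Rightarrow> real \<Rightarrow> 'a list \<Rightarrow> nat \<Rightarrow> shape \<Rightarrow> nat option pmf" where
  "univer_tree Mb Ms topk p v d s = bind_pmf (sample_tree Ms topk v s) (univer_dec Mb Ms p v d)"

definition greedy_tree :: "('a::finite list \<Rightarrow> 'a pmf) \<Rightarrow> ('a list \<Rightarrow> 'a pmf) \<Rightarrow> ('a list \<Rightarrow> nat \<Rightarrow> 'a list)
    \<Rightarrow> 'a list \<Rightarrow> nat \<Rightarrow> shape \<Rightarrow> nat pmf" where
  "greedy_tree Mb Ms topk v d s = bind_pmf (sample_tree Ms topk v s) (greedy Mb Ms v d)"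

lemma sample_tree_node:
  fixes topk :: "'a::finite list \<Rightarrow> nat \<Rightarrow> 'a list" and v :: "'a list" and cs :: "shape list"
  assumes "cs \<noteq> []"
  defines "hs \<equiv> topk v (length cs - 1)"
  shows "bind_pmf (sample_tree Ms topk v (Sh cs)) f = bind_pmf (msneg_pmf Ms v (set hs)) (\<lambda>um.
    bind_pmf (seq_pmf (map (\<lambda>j. sample_tree Ms topk (v @ [(hs @ [um]) ! j]) (cs ! j)) [0..<length cs]))
      (\<lambda>ts. f (DT (zip (hs @ [um]) ts))))"
  using assms by (simp add: Let_def bind_assoc_pmf bind_map_pmf del: upt_Suc)

lemma univer_tree_node:
  fixes Mb Ms :: "'a::finite list \<Rightarrow> 'a pmf" and topk :: "'a list \<Rightarrow> nat \<Rightarrow> 'a list"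
    and v :: "'a list" and cs :: "shape list"
  defines "hs \<equiv> topk v (length cs - 1)"
  assumes "cs \<noteq> []" and length_hs: "length hs = length cs - 1"
  shows "univer_tree Mb Ms topk p v d (Sh cs) = bind_pmf (msneg_pmf Ms v (set hs)) (\<lambda>um.
     first_some (map (\<lambda>j. univer_tree Mb Ms topk (child_prefix_prob (pv Mb Ms v (set hs) um p) (hs @ [um]) j)
                     (v @ [(hs @ [um]) ! j]) (Suc d) (cs ! j)) [0..<length cs])
       (accept_test (residual_prob (pv Mb Ms v (set hs) um p) (hs @ [um])) d))"
proof -
  let ?ps = "\<lambda>um. map (\<lambda>j. sample_tree Ms topk (v @ [(hs @ [um]) ! j]) (cs ! j)) [0..<length cs]"
  let ?P = "\<lambda>um. pv Mb Ms v (set hs) um p"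
  let ?U = "\<lambda>um j. univer_dec Mb Ms (child_prefix_prob (?P um) (hs @ [um]) j) (v @ [(hs @ [um]) ! j]) (Suc d)"
  let ?q = "\<lambda>um. accept_test (residual_prob (?P um) (hs @ [um])) d"
  have "univer_tree Mb Ms topk p v d (Sh cs) = bind_pmf (msneg_pmf Ms v (set hs)) (\<lambda>um.
      bind_pmf (seq_pmf (?ps um)) (\<lambda>ts. univer_dec Mb Ms p v d (DT (zip (hs @ [um]) ts))))"
    unfolding univer_tree_def hs_def using sample_tree_node[OF \<open>cs \<noteq> []\<close>] .
  also have "\<dots> = bind_pmf (msneg_pmf Ms v (set hs)) (\<lambda>um.
      bind_pmf (seq_pmf (?ps um)) (\<lambda>ts. first_some (map (\<lambda>j. ?U um j (ts ! j)) [0..<length (?ps um)]) (?q um)))"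
  proof (intro bind_pmf_cong refl)
    fix um ts
    assume "ts \<in> set_pmf (seq_pmf (?ps um))"
    then have "length ts = length cs"
      by (simp add: length_in_set_seq_pmf)
    then show "univer_dec Mb Ms p v d (DT (zip (hs @ [um]) ts)) =
        first_some (map (\<lambda>j. ?U um j (ts ! j)) [0..<length (?ps um)]) (?q um)"
      using \<open>cs \<noteq> []\<close> length_hs
      by (subst univer_dec.simps)
        (auto simp: Let_def child_prefix_prob_def residual_prob_def intro!: arg_cong2[where f = first_some] map_cong)
  qed
  also have "\<dots> = bind_pmf (msneg_pmf Ms v (set hs)) (\<lambda>um.
      first_some (map (\<lambda>j. bind_pmf (?ps um ! j) (?U um j)) [0..<length (?ps um)]) (?q um))"
    by (subst bind_seq_pmf_first_some) rule
  also have "\<dots> = bind_pmf (msneg_pmf Ms v (set hs)) (\<lambda>um.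
      first_some (map (\<lambda>j. univer_tree Mb Ms topk (child_prefix_prob (?P um) (hs @ [um]) j)
          (v @ [(hs @ [um]) ! j]) (Suc d) (cs ! j)) [0..<length cs]) (?q um))"
    by (intro bind_pmf_cong refl arg_cong2[where f = first_some] map_cong) (auto simp: univer_tree_def)
  finally show ?thesis .
qed

lemma greedy_zip_children:
  assumes len: "length ts = length (hs @ [um])"
  shows "greedy Mb Ms v d (DT (zip (hs @ [um]) ts)) = bind_pmf (token_or_stop_pmf (pv Mb Ms v (set hs) um 1))
    (\<lambda>y. case y of
        None \<Rightarrow> return_pmf d
      | Some x \<Rightarrow> (case map_of (zip (hs @ [um]) [0..<length ts]) x of
          None \<Rightarrow> return_pmf d
        | Some j \<Rightarrow> greedy Mb Ms (v @ [x]) (Suc d) (ts ! j)))"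
proof -
  have "zip (hs @ [um]) ts \<noteq> []" "map fst (zip (hs @ [um]) ts) = hs @ [um]"
    using len by (auto simp: zip_eq_Nil_iff)
  then have "greedy Mb Ms v d (DT (zip (hs @ [um]) ts)) = bind_pmf (token_or_stop_pmf (pv Mb Ms v (set hs) um 1))
    (\<lambda>y. case y of
        None \<Rightarrow> return_pmf d
      | Some x \<Rightarrow> (case map_of (zip (hs @ [um]) ts) x of
          None \<Rightarrow> return_pmf d
        | Some t \<Rightarrow> greedy Mb Ms (v @ [x]) (Suc d) t))"
    by (subst greedy.simps) (simp only: Let_def if_False butlast_snoc last_snoc)
  moreover have "map_of (zip (hs @ [um]) ts) = (\<lambda>x. map_option ((!) ts) (map_of (zip (hs @ [um]) [0..<length ts]) x))"
    using map_of_zip_nth_index[OF len] len by (intro ext) simp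
  ultimately show ?thesis
    by (simp only: case_map_option o_def)
qed

lemma greedy_tree_node:
  fixes Mb Ms :: "'a::finite list \<Rightarrow> 'a pmf" and topk :: "'a list \<Rightarrow> nat \<Rightarrow> 'a list"
    and v :: "'a list" and cs :: "shape list"
  defines "hs \<equiv> topk v (length cs - 1)"
  assumes "cs \<noteq> []" and length_hs: "length hs = length cs - 1"
  shows "greedy_tree Mb Ms topk v d (Sh cs) = bind_pmf (msneg_pmf Ms v (set hs)) (\<lambda>um.
     bind_pmf (token_or_stop_pmf (pv Mb Ms v (set hs) um 1)) (\<lambda>y. case y of
        None \<Rightarrow> return_pmf d
      | Some x \<Rightarrow> (case map_of (zip (hs @ [um]) [0..<length cs]) x of
          None \<Rightarrow> return_pmf d
        | Some j \<Rightarrow> greedy_tree Mb Ms topk (v @ [x]) (Suc d) (cs ! j))))"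
proof -
  let ?ps = "\<lambda>um. map (\<lambda>j. sample_tree Ms topk (v @ [(hs @ [um]) ! j]) (cs ! j)) [0..<length cs]"
  let ?w = "\<lambda>um. token_or_stop_pmf (pv Mb Ms v (set hs) um 1)"
  let ?K = "\<lambda>um ts y. case y of None \<Rightarrow> return_pmf d
      | Some x \<Rightarrow> (case map_of (zip (hs @ [um]) [0..<length cs]) x of
          None \<Rightarrow> return_pmf d
        | Some j \<Rightarrow> greedy Mb Ms (v @ [x]) (Suc d) (ts ! j))"
  have "greedy_tree Mb Ms topk v d (Sh cs) = bind_pmf (msneg_pmf Ms v (set hs)) (\<lambda>um.
      bind_pmf (seq_pmf (?ps um)) (\<lambda>ts. greedy Mb Ms v d (DT (zip (hs @ [um]) ts))))"
    unfolding greedy_tree_def hs_def using sample_tree_node[OF \<open>cs \<noteq> []\<close>] .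
  also have "\<dots> = bind_pmf (msneg_pmf Ms v (set hs)) (\<lambda>um.
      bind_pmf (seq_pmf (?ps um)) (\<lambda>ts. bind_pmf (?w um) (?K um ts)))"
  proof (intro bind_pmf_cong refl)
    fix um ts
    assume "ts \<in> set_pmf (seq_pmf (?ps um))"
    then have "length ts = length (hs @ [um])" "length ts = length cs"
      using \<open>cs \<noteq> []\<close> length_hs by (simp_all add: length_in_set_seq_pmf)
    then show "greedy Mb Ms v d (DT (zip (hs @ [um]) ts)) = bind_pmf (?w um) (?K um ts)"
      by (simp only: greedy_zip_children)
  qed
  also have "\<dots> = bind_pmf (msneg_pmf Ms v (set hs)) (\<lambda>um.
      bind_pmf (?w um) (\<lambda>y. bind_pmf (seq_pmf (?ps um)) (\<lambda>ts. ?K um ts y)))"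
    by (subst bind_commute_pmf) rule
  also have "\<dots> = bind_pmf (msneg_pmf Ms v (set hs)) (\<lambda>um.
     bind_pmf (?w um) (\<lambda>y. case y of
        None \<Rightarrow> return_pmf d
      | Some x \<Rightarrow> (case map_of (zip (hs @ [um]) [0..<length cs]) x of
          None \<Rightarrow> return_pmf d
        | Some j \<Rightarrow> greedy_tree Mb Ms topk (v @ [x]) (Suc d) (cs ! j))))"
    by (intro bind_pmf_cong refl)
      (auto simp: bind_seq_pmf_nth greedy_tree_def split: option.split dest!: map_of_zip_upt_SomeD)
  finally show ?thesis .
qed

lemma set_pmf_greedy_ge: "n \<in> set_pmf (greedy Mb Ms v d T) \<Longrightarrow> d \<le> n"
proof (induction Mb Ms v d T arbitrary: n rule: greedy.induct)
  case (1 Mb Ms v d cs)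
  then show ?case
    by (auto simp: Let_def split: if_splits option.splits) (metis Suc_leD order_refl)
qed

lemma mean_depth_greedy_tree_ge: "of_nat d \<le> mean_depth (greedy_tree Mb Ms topk v d s)"
proof -
  have "(\<integral>\<^sup>+ n. of_nat d \<partial>measure_pmf (greedy_tree Mb Ms topk v d s)) \<le> mean_depth (greedy_tree Mb Ms topk v d s)"
    by (intro nn_integral_mono_AE) (auto simp: AE_measure_pmf_iff greedy_tree_def dest: set_pmf_greedy_ge)
  then show ?thesis
    by (simp add: measure_pmf.emeasure_space_1)
qed

lemma mean_depth_token_or_stop_children:
  fixes w :: "'a::finite \<Rightarrow> real" and F :: "'a \<Rightarrow> nat \<Rightarrow> nat pmf"
  assumes w: "\<And>x. 0 \<le> w x" "(\<Sum>x\<in>UNIV. w x) \<le> 1" and distinct_us: "distinct us"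
    and F_ge: "\<And>x j. of_nat d \<le> mean_depth (F x j)"
  shows "(\<integral>\<^sup>+ y. mean_depth (case y of None \<Rightarrow> return_pmf d
        | Some x \<Rightarrow> (case map_of (zip us [0..<length us]) x of None \<Rightarrow> return_pmf d | Some j \<Rightarrow> F x j))
      \<partial>measure_pmf (token_or_stop_pmf w))
    = of_nat d + (\<Sum>j<length us. ennreal (w (us ! j)) * (mean_depth (F (us ! j) j) - of_nat d))"
proof -
  define e where "e x = (case map_of (zip us [0..<length us]) x of None \<Rightarrow> 0
    | Some j \<Rightarrow> mean_depth (F x j) - of_nat d)" for x
  have "(\<Sum>x\<in>UNIV. e x * ennreal (w x)) = (\<Sum>x\<in>set us. e x * ennreal (w x))"
  proof (intro sum.mono_neutral_right ballI)
    fix x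
    assume "x \<in> UNIV - set us"
    then have "map_of (zip us [0..<length us]) x = None"
      by simp
    then show "e x * ennreal (w x) = 0"
      by (simp add: e_def del: map_of_zip_is_None)
  qed auto
  also have "\<dots> = (\<Sum>j<length us. e (us ! j) * ennreal (w (us ! j)))"
    by (rule sum_nth_distinct_set[OF distinct_us, symmetric])
  also have "\<dots> = (\<Sum>j<length us. ennreal (w (us ! j)) * (mean_depth (F (us ! j) j) - of_nat d))"
    by (intro sum.cong) (simp_all add: e_def map_of_zip_nth[OF _ distinct_us] mult.commute)
  finally have e_sum: "(\<Sum>x\<in>UNIV. e x * ennreal (w x))
      = (\<Sum>j<length us. ennreal (w (us ! j)) * (mean_depth (F (us ! j) j) - of_nat d))" .
  have "ennreal (1 - (\<Sum>x\<in>UNIV. w x)) + (\<Sum>x\<in>UNIV. ennreal (w x)) = 1"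
    using w by (simp add: sum_ennreal sum_nonneg flip: ennreal_plus)
  then have "of_nat d * ennreal (1 - (\<Sum>x\<in>UNIV. w x)) + (\<Sum>x\<in>UNIV. of_nat d * ennreal (w x)) = (of_nat d :: ennreal)"
    by (metis distrib_left mult_1_right sum_distrib_left)
  moreover have "mean_depth (case map_of (zip us [0..<length us]) x of None \<Rightarrow> return_pmf d
      | Some j \<Rightarrow> F x j) = of_nat d + e x" for x
    using F_ge by (cases "map_of (zip us [0..<length us]) x")
      (simp_all add: e_def measure_pmf.emeasure_space_1 flip: ennreal_ineq_diff_add del: map_of_zip_is_None)
  ultimately show ?thesis
    by (simp add: nn_integral_token_or_stop_pmf[OF w] distrib_right sum.distrib e_sum add.assoc[symmetric])
qed

lemma mean_depth_greedy_tree_node: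
  fixes Mb Ms :: "'a::finite list \<Rightarrow> 'a pmf" and topk :: "'a list \<Rightarrow> nat \<Rightarrow> 'a list"
    and v :: "'a list" and cs :: "shape list"
  defines "hs \<equiv> topk v (length cs - 1)"
  assumes "cs \<noteq> []" and length_hs: "length hs = length cs - 1"
    and distinct_hs: "distinct hs" and hs_ne_UNIV: "set hs \<noteq> UNIV"
  shows "mean_depth (greedy_tree Mb Ms topk v d (Sh cs)) = of_nat d + (\<integral>\<^sup>+ um.
     (\<Sum>j<length cs. ennreal (pv Mb Ms v (set hs) um 1 ((hs @ [um]) ! j))
        * (mean_depth (greedy_tree Mb Ms topk (v @ [(hs @ [um]) ! j]) (Suc d) (cs ! j)) - of_nat d))
     \<partial>measure_pmf (msneg_pmf Ms v (set hs)))"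
proof -
  let ?w = "\<lambda>um. pv Mb Ms v (set hs) um 1"
  let ?K = "\<lambda>um y. case y of None \<Rightarrow> return_pmf d
      | Some x \<Rightarrow> (case map_of (zip (hs @ [um]) [0..<length cs]) x of None \<Rightarrow> return_pmf d
        | Some j \<Rightarrow> greedy_tree Mb Ms topk (v @ [x]) (Suc d) (cs ! j))"
  have inner: "(\<integral>\<^sup>+ y. mean_depth (?K um y) \<partial>measure_pmf (token_or_stop_pmf (?w um)))
      = of_nat d + (\<Sum>j<length cs. ennreal (?w um ((hs @ [um]) ! j))
          * (mean_depth (greedy_tree Mb Ms topk (v @ [(hs @ [um]) ! j]) (Suc d) (cs ! j)) - of_nat d))"
    if um: "um \<in> set_pmf (msneg_pmf Ms v (set hs))" for um
  proof -
    have "0 < msneg Ms v (set hs) um"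
      using um hs_ne_UNIV by (simp add: set_pmf_msneg_pmf)
    then have w: "\<And>x. 0 \<le> ?w um x" "(\<Sum>x\<in>UNIV. ?w um x) \<le> 1"
      using pv_nonneg[where p = 1] sum_pv_le_1[where p = 1 and Mb = Mb] by auto
    have distinct_us: "distinct (hs @ [um])" and length_us: "length (hs @ [um]) = length cs"
      using distinct_hs notin_set_pmf_msneg_pmf[OF hs_ne_UNIV um] \<open>cs \<noteq> []\<close> length_hs by auto
    have "of_nat d \<le> mean_depth (greedy_tree Mb Ms topk (v @ [x]) (Suc d) (cs ! j))" for x j
      using mean_depth_greedy_tree_ge[of "Suc d"] by (rule order_trans[rotated]) simp
    from mean_depth_token_or_stop_children[OF w distinct_us this]
    show ?thesis
      unfolding length_us .
  qed
  have "greedy_tree Mb Ms topk v d (Sh cs)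
      = bind_pmf (msneg_pmf Ms v (set hs)) (\<lambda>um. bind_pmf (token_or_stop_pmf (?w um)) (?K um))"
    using greedy_tree_node[where topk = topk and v = v and cs = cs, OF \<open>cs \<noteq> []\<close> length_hs[unfolded hs_def]]
    unfolding hs_def .
  then have "mean_depth (greedy_tree Mb Ms topk v d (Sh cs))
      = (\<integral>\<^sup>+ um. (\<integral>\<^sup>+ y. mean_depth (?K um y) \<partial>measure_pmf (token_or_stop_pmf (?w um)))
          \<partial>measure_pmf (msneg_pmf Ms v (set hs)))"
    by simp
  also have "\<dots> = (\<integral>\<^sup>+ um. of_nat d + (\<Sum>j<length cs. ennreal (?w um ((hs @ [um]) ! j))
      * (mean_depth (greedy_tree Mb Ms topk (v @ [(hs @ [um]) ! j]) (Suc d) (cs ! j)) - of_nat d))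
      \<partial>measure_pmf (msneg_pmf Ms v (set hs)))"
    by (intro nn_integral_cong_AE) (simp add: AE_measure_pmf_iff inner)
  finally show ?thesis
    by (simp add: nn_integral_add measure_pmf.emeasure_space_1)
qed

context
  fixes Mb Ms :: "'a::finite list \<Rightarrow> 'a pmf" and topk :: "'a list \<Rightarrow> nat \<Rightarrow> 'a list"
  assumes top_ok: "\<And>v k. k < CARD('a) \<Longrightarrow>
      length (topk v k) = k \<and> distinct (topk v k)
      \<and> sorted_wrt (\<lambda>x y. pmf (Ms v) y \<le> pmf (Ms v) x) (topk v k)
      \<and> (\<forall>x\<in>set (topk v k). \<forall>y. y \<notin> set (topk v k) \<longrightarrow> pmf (Ms v) y \<le> pmf (Ms v) x)"
begin

text \<open>Only the length and distinctness of the drafted top tokens are used: the argument works for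
  any choice of the set \<open>H\<^sub>v\<close> of \<open>m - 1\<close> tokens, not only the most probable ones.\<close>

lemma topk_children:
  assumes "shape_ok CARD('a) (Sh cs)" and "cs \<noteq> []"
  shows "length (topk v (length cs - 1)) = length cs - 1" "distinct (topk v (length cs - 1))"
    and "set (topk v (length cs - 1)) \<noteq> UNIV"
proof -
  have "length cs - 1 < CARD('a)"
    using assms by (cases cs) auto
  then show length: "length (topk v (length cs - 1)) = length cs - 1"
    and "distinct (topk v (length cs - 1))"
    using top_ok by blast+
  have "card (set (topk v (length cs - 1))) < CARD('a)"
    using card_length[of "topk v (length cs - 1)"] length \<open>length cs - 1 < CARD('a)\<close> by linarith
  then show "set (topk v (length cs - 1)) \<noteq> UNIV"
    by auto
qed

lemma sampled_node_allocation:
  assumes "shape_ok CARD('a) (Sh cs)" "cs \<noteq> []" "0 \<le> p" "p \<le> 1"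
    and um: "um \<in> set_pmf (msneg_pmf Ms v (set (topk v (length cs - 1))))"
  shows "length (topk v (length cs - 1) @ [um]) = length cs" "distinct (topk v (length cs - 1) @ [um])"
    and "\<And>u. 0 \<le> pv Mb Ms v (set (topk v (length cs - 1))) um p u"
    and "(\<Sum>u\<in>UNIV. pv Mb Ms v (set (topk v (length cs - 1))) um p u) \<le> 1"
proof -
  note top = topk_children[OF assms(1,2), of v]
  show "length (topk v (length cs - 1) @ [um]) = length cs" "distinct (topk v (length cs - 1) @ [um])"
    using top(1,2) notin_set_pmf_msneg_pmf[OF top(3) um] \<open>cs \<noteq> []\<close> by auto
  show "\<And>u. 0 \<le> pv Mb Ms v (set (topk v (length cs - 1))) um p u"
    using assms(3,4) by (rule pv_nonneg)
  show "(\<Sum>u\<in>UNIV. pv Mb Ms v (set (topk v (length cs - 1))) um p u) \<le> 1"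
    using sum_pv_le_1[OF assms(3,4)] um top(3) by (simp add: set_pmf_msneg_pmf)
qed

lemma pmf_univer_tree_None:
  "shape_ok CARD('a) s \<Longrightarrow> 0 \<le> p \<Longrightarrow> p \<le> 1 \<Longrightarrow> pmf (univer_tree Mb Ms topk p v d s) None = 1 - p"
proof (induction s arbitrary: p v d)
  case (Sh cs)
  show ?case
  proof (cases "cs = []")
    case True
    then show ?thesis
      using Sh.prems by (simp add: univer_tree_def bind_return_pmf pmf_accept_test_None)
  next
    case False
    define hs where "hs = topk v (length cs - 1)"
    let ?P = "\<lambda>um. pv Mb Ms v (set hs) um p"
    let ?X = "\<lambda>um j. univer_tree Mb Ms topk (child_prefix_prob (?P um) (hs @ [um]) j) (v @ [(hs @ [um]) ! j]) (Suc d) (cs ! j)"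
    let ?T = "\<lambda>um. first_some (map (?X um) [0..<length cs]) (accept_test (residual_prob (?P um) (hs @ [um])) d)"
    note top = topk_children[OF Sh.prems(1) False, of v, folded hs_def]
    have T_None: "pmf (?T um) None = 1 - (\<Sum>u\<in>UNIV. ?P um u)"
      if um: "um \<in> set_pmf (msneg_pmf Ms v (set hs))" for um
    proof -
      note alloc = sampled_node_allocation[OF Sh.prems(1) False Sh.prems(2,3) um[unfolded hs_def], folded hs_def]
      have "pmf (?X um j) None = 1 - child_prefix_prob (?P um) (hs @ [um]) j" if "j < length (hs @ [um])" for j
        using that alloc child_prefix_prob_bounds[of "?P um" "hs @ [um]" j] Sh.prems(1)
        by (intro Sh.IH) auto
      from pmf_first_some_sequential_None[OF alloc(3,4,2) this]
      show ?thesis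
        unfolding alloc(1) .
    qed
    have "pmf (univer_tree Mb Ms topk p v d (Sh cs)) None = (\<integral>um. 1 - (\<Sum>u\<in>UNIV. ?P um u) \<partial>msneg_pmf Ms v (set hs))"
      unfolding univer_tree_node[where topk = topk and v = v and cs = cs, OF False top(1)[unfolded hs_def]]
        pmf_bind hs_def[symmetric]
      by (intro integral_cong_AE) (simp_all add: AE_measure_pmf_iff T_None)
    also have "\<dots> = (\<Sum>um\<in>UNIV. (1 - (\<Sum>u\<in>UNIV. ?P um u)) * msneg Ms v (set hs) um)"
      by (subst integral_measure_pmf_real[of UNIV]) (simp_all add: pmf_msneg_pmf[OF top(3)])
    also have "\<dots> = 1 - p"
      using sum_msneg[OF top(3), of Ms v] sum_msneg_sum_pv[OF top(3) Sh.prems(2,3), of Ms v Mb]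
      by (simp add: right_diff_distrib sum_subtractf mult.commute)
    finally show ?thesis .
  qed
qed

lemma size_nth_child_less: "j < length cs \<Longrightarrow> Suc (size (cs ! j)) \<le> size (Sh cs)"
  using size_list_estimation'[of "cs ! j" cs "size (cs ! j)" size] by simp

lemma set_pmf_univer_tree:
  "shape_ok CARD('a) s \<Longrightarrow> set_pmf (univer_tree Mb Ms topk p v d s) \<subseteq> insert None (Some ` {..d + size s})"
proof (induction s arbitrary: p v d)
  case (Sh cs)
  show ?case
  proof (cases "cs = []")
    case True
    then show ?thesis
      using set_pmf_accept_test[of p d] by (auto simp: univer_tree_def bind_return_pmf)
  next
    case False
    have children: "r \<in> insert None (Some ` {..d + size (Sh cs)})"
      if "r \<in> set_pmf (univer_tree Mb Ms topk q v' (Suc d) (cs ! j))" "j < length cs" for r j q v'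
    proof -
      have "shape_ok CARD('a) (cs ! j)"
        using Sh.prems that by simp
      then have "set_pmf (univer_tree Mb Ms topk q v' (Suc d) (cs ! j)) \<subseteq> insert None (Some ` {..Suc d + size (cs ! j)})"
        using that by (intro Sh.IH) simp_all
      also have "\<dots> \<subseteq> insert None (Some ` {..d + size (Sh cs)})"
        using size_nth_child_less[OF that(2)] by auto
      finally show ?thesis
        using that(1) by blast
    qed
    show ?thesis
      unfolding univer_tree_node[where topk = topk and v = v and cs = cs, OF False topk_children(1)[OF Sh.prems False]]
        set_bind_pmf
      by (intro UN_least order_trans[OF set_pmf_first_some] Un_least)
        (auto dest: children set_pmf_accept_test[THEN subsetD])
  qed
qed

lemma mean_stop_depth_univer_tree_finite:
  assumes "shape_ok CARD('a) s"
  shows "mean_stop_depth (univer_tree Mb Ms topk p v d s) < \<top>"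
proof -
  have "mean_stop_depth (univer_tree Mb Ms topk p v d s) \<le> (\<integral>\<^sup>+ r. of_nat (d + size s) \<partial>measure_pmf (univer_tree Mb Ms topk p v d s))"
  proof (intro nn_integral_mono_AE, unfold AE_measure_pmf_iff, intro ballI)
    fix r
    assume "r \<in> set_pmf (univer_tree Mb Ms topk p v d s)"
    then show "stop_depth r \<le> of_nat (d + size s)"
      using set_pmf_univer_tree[OF assms, of p v d] by (cases r) (auto simp: stop_depth_def simp flip: of_nat_add)
  qed
  also have "\<dots> < \<top>"
    by (simp add: measure_pmf.emeasure_space_1 of_nat_less_top)
  finally show ?thesis .
qed

lemma mean_stop_depth_univer_branch_ge:
  assumes shape: "shape_ok CARD('a) (Sh cs)" and "cs \<noteq> []" and p: "0 \<le> p" "p \<le> 1"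
    and um: "um \<in> set_pmf (msneg_pmf Ms v (set (topk v (length cs - 1))))"
    and children: "\<And>j q v'. j < length cs \<Longrightarrow> 0 \<le> q \<Longrightarrow> q \<le> 1 \<Longrightarrow>
      ennreal q * mean_depth (greedy_tree Mb Ms topk v' (Suc d) (cs ! j))
        \<le> mean_stop_depth (univer_tree Mb Ms topk q v' (Suc d) (cs ! j))"
  defines "us \<equiv> topk v (length cs - 1) @ [um]" and "P \<equiv> pv Mb Ms v (set (topk v (length cs - 1))) um p"
  shows "ennreal (\<Sum>u\<in>UNIV. P u) * of_nat d
      + (\<Sum>j<length cs. ennreal (P (us ! j)) * (mean_depth (greedy_tree Mb Ms topk (v @ [us ! j]) (Suc d) (cs ! j)) - of_nat d))
    \<le> mean_stop_depth (first_some (map (\<lambda>j. univer_tree Mb Ms topk (child_prefix_prob P us j) (v @ [us ! j]) (Suc d) (cs ! j))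
        [0..<length cs]) (accept_test (residual_prob P us) d))"
proof -
  note alloc = sampled_node_allocation[OF shape \<open>cs \<noteq> []\<close> p um, folded us_def P_def]
  let ?X = "\<lambda>j. univer_tree Mb Ms topk (child_prefix_prob P us j) (v @ [us ! j]) (Suc d) (cs ! j)"
  let ?G = "\<lambda>j. mean_depth (greedy_tree Mb Ms topk (v @ [us ! j]) (Suc d) (cs ! j))"
  have cpp: "0 \<le> child_prefix_prob P us j" "child_prefix_prob P us j \<le> 1" if "j < length us" for j
    using child_prefix_prob_bounds[OF alloc(3,4,2) that] by auto
  have "pmf (?X j) None = 1 - child_prefix_prob P us j" if "j < length us" for j
    using shape that alloc(1) cpp[OF that] by (intro pmf_univer_tree_None) auto
  moreover have "ennreal (child_prefix_prob P us j) * (of_nat d + (?G j - of_nat d)) \<le> mean_stop_depth (?X j)"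
    if "j < length us" for j
  proof -
    have "of_nat d \<le> ?G j"
      using mean_depth_greedy_tree_ge[of "Suc d"] by (rule order_trans[rotated]) simp
    then show ?thesis
      using children[of j] that alloc(1) cpp[OF that] by (simp flip: ennreal_ineq_diff_add)
  qed
  ultimately show ?thesis
    using mean_stop_depth_first_some_sequential_ge[OF alloc(3,4,2), where X = ?X and d = d and g = "\<lambda>j. ?G j - of_nat d"]
    unfolding alloc(1) by blast
qed

lemma mean_stop_depth_univer_tree_node_ge:
  assumes shape: "shape_ok CARD('a) (Sh cs)" and "cs \<noteq> []" and p: "0 \<le> p" "p \<le> 1"
    and children: "\<And>j q v'. j < length cs \<Longrightarrow> 0 \<le> q \<Longrightarrow> q \<le> 1 \<Longrightarrow>
      ennreal q * mean_depth (greedy_tree Mb Ms topk v' (Suc d) (cs ! j))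
        \<le> mean_stop_depth (univer_tree Mb Ms topk q v' (Suc d) (cs ! j))"
  shows "ennreal p * mean_depth (greedy_tree Mb Ms topk v d (Sh cs)) \<le> mean_stop_depth (univer_tree Mb Ms topk p v d (Sh cs))"
proof -
  let ?hs = "topk v (length cs - 1)"
  let ?M = "measure_pmf (msneg_pmf Ms v (set ?hs))"
  let ?us = "\<lambda>um. ?hs @ [um]"
  let ?P = "\<lambda>um. pv Mb Ms v (set ?hs) um p"
  let ?w = "\<lambda>um. pv Mb Ms v (set ?hs) um 1"
  define g where "g um j = mean_depth (greedy_tree Mb Ms topk (v @ [?us um ! j]) (Suc d) (cs ! j)) - of_nat d" for um j
  note top = topk_children[OF shape \<open>cs \<noteq> []\<close>, of v]
  have weights: "(\<integral>\<^sup>+ um. ennreal p * (ennreal (?w um (?us um ! j)) * g um j) \<partial>?M)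
      \<le> (\<integral>\<^sup>+ um. ennreal (?P um (?us um ! j)) * g um j \<partial>?M)" if "j < length cs" for j
    unfolding g_def
    by (rule nn_integral_pv_child_mono[OF top(3) p,
          where g = "\<lambda>x. mean_depth (greedy_tree Mb Ms topk (v @ [x]) (Suc d) (cs ! j)) - of_nat d"])
      (use that top(1) in simp)
  have "ennreal p * mean_depth (greedy_tree Mb Ms topk v d (Sh cs))
      = ennreal p * of_nat d + (\<Sum>j<length cs. \<integral>\<^sup>+ um. ennreal p * (ennreal (?w um (?us um ! j)) * g um j) \<partial>?M)"
    using mean_depth_greedy_tree_node[where topk = topk and v = v and cs = cs, OF \<open>cs \<noteq> []\<close> top]
    by (simp add: g_def distrib_left nn_integral_sum nn_integral_cmult sum_distrib_left)
  also have "\<dots> \<le> ennreal p * of_nat d + (\<Sum>j<length cs. \<integral>\<^sup>+ um. ennreal (?P um (?us um ! j)) * g um j \<partial>?M)"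
    using weights by (intro add_mono sum_mono order_refl) auto
  also have "\<dots> = (\<integral>\<^sup>+ um. ennreal (\<Sum>u\<in>UNIV. ?P um u) * of_nat d \<partial>?M)
      + (\<Sum>j<length cs. \<integral>\<^sup>+ um. ennreal (?P um (?us um ! j)) * g um j \<partial>?M)"
    unfolding nn_integral_msneg_sum_pv[OF top(3) p] ..
  also have "\<dots> = (\<integral>\<^sup>+ um. ennreal (\<Sum>u\<in>UNIV. ?P um u) * of_nat d + (\<Sum>j<length cs. ennreal (?P um (?us um ! j)) * g um j) \<partial>?M)"
    by (simp add: nn_integral_add nn_integral_sum)
  also have "\<dots> \<le> mean_stop_depth (univer_tree Mb Ms topk p v d (Sh cs))"
    unfolding univer_tree_node[where topk = topk and v = v and cs = cs, OF \<open>cs \<noteq> []\<close> top(1)]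
      nn_integral_bind_pmf
  proof (intro nn_integral_mono_AE, unfold AE_measure_pmf_iff, intro ballI)
    fix um
    assume "um \<in> set_pmf (msneg_pmf Ms v (set ?hs))"
    from mean_stop_depth_univer_branch_ge[OF shape \<open>cs \<noteq> []\<close> p this children]
    show "ennreal (\<Sum>u\<in>UNIV. ?P um u) * of_nat d + (\<Sum>j<length cs. ennreal (?P um (?us um ! j)) * g um j)
        \<le> mean_stop_depth (first_some (map (\<lambda>j. univer_tree Mb Ms topk (child_prefix_prob (?P um) (?us um) j)
            (v @ [?us um ! j]) (Suc d) (cs ! j)) [0..<length cs]) (accept_test (residual_prob (?P um) (?us um)) d))"
      unfolding g_def .
  qed
  finally show ?thesis .
qed

lemma mean_depth_greedy_tree_le_univer_tree:
  "shape_ok CARD('a) s \<Longrightarrow> 0 \<le> p \<Longrightarrow> p \<le> 1 \<Longrightarrow>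
    ennreal p * mean_depth (greedy_tree Mb Ms topk v d s) \<le> mean_stop_depth (univer_tree Mb Ms topk p v d s)"
proof (induction s arbitrary: p v d)
  case (Sh cs)
  show ?case
  proof (cases "cs = []")
    case True
    then show ?thesis
      using Sh.prems
      by (simp add: univer_tree_def greedy_tree_def bind_return_pmf mean_stop_depth_accept_test)
  next
    case False
    show ?thesis
      using Sh.prems by (intro mean_stop_depth_univer_tree_node_ge False) (auto intro: Sh.IH)
  qed
qed

end

theorem lemma1:
  fixes Mb Ms :: "'a::finite list \<Rightarrow> 'a pmf"
    and topk :: "'a list \<Rightarrow> nat \<Rightarrow> 'a list"
    and S :: shape
    and pr :: real
  assumes top_ok: "\<And>v k. k < CARD('a) \<Longrightarrow>
      length (topk v k) = k \<and> distinct (topk v k)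
      \<and> sorted_wrt (\<lambda>x y. pmf (Ms v) y \<le> pmf (Ms v) x) (topk v k)
      \<and> (\<forall>x\<in>set (topk v k). \<forall>y. y \<notin> set (topk v k) \<longrightarrow> pmf (Ms v) y \<le> pmf (Ms v) x)"
    and shape: "shape_ok CARD('a) S"
    and pr: "0 \<le> pr" "pr \<le> 1"
  shows "measure_pmf.expectation (bind_pmf (sample_tree Ms topk [] S) (N_Mod Mb Ms pr)) real
         \<ge> pr * measure_pmf.expectation (bind_pmf (sample_tree Ms topk [] S) (N_Greedy Mb Ms)) real"
proof -
  let ?U = "mean_stop_depth (univer_tree Mb Ms topk pr [] 0 S)"
  let ?G = "mean_depth (greedy_tree Mb Ms topk [] 0 S)"
  have "ennreal (real (case r of None \<Rightarrow> 0 | Some d \<Rightarrow> d)) = stop_depth r" for r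
    by (simp add: stop_depth_def ennreal_of_nat_eq_real_of_nat split: option.split)
  then have mod_eq: "measure_pmf.expectation (bind_pmf (sample_tree Ms topk [] S) (N_Mod Mb Ms pr)) real = enn2real ?U"
    by (subst integral_eq_nn_integral) (auto simp: N_Mod_def univer_tree_def)
  have greedy_eq: "measure_pmf.expectation (bind_pmf (sample_tree Ms topk [] S) (N_Greedy Mb Ms)) real = enn2real ?G"
    by (subst integral_eq_nn_integral) (auto simp: N_Greedy_def greedy_tree_def ennreal_of_nat_eq_real_of_nat)
  have "pr * enn2real ?G = enn2real (ennreal pr * ?G)"
    using pr by (simp add: enn2real_mult)
  also have "\<dots> \<le> enn2real ?U"
    using mean_depth_greedy_tree_le_univer_tree[OF top_ok shape pr] mean_stop_depth_univer_tree_finite[OF top_ok shape]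
    by (rule enn2real_mono)
  finally show ?thesis
    unfolding mod_eq greedy_eq .
qed

end
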